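(* Let $(f,\bar f)\colon (G,P_G)\to(H,P_H)$ be a regular epimorphism in $\mathsf{PreOrdGrp}$ (i.e. both $f$ and $\bar f$ surjective). The following conditions are equivalent: (1) (a) $\mathsf{Ker}(f)\subseteq Z(G)$, and (b) $\bar f\colon P_G\to P_H$ is a special homogeneous surjection in the category $\mathsf{Mon}$ of monoids; (2) $(f,\bar f)$ is a $\Gamma$-normal extension; (3) $(f,\bar f)$ is a $\Gamma$-central extension.
   Context: A preordered group is a pair $(G,P_G)$ where $G$ is a group (written additively, not necessarily abelian) and $P_G\subseteq G$ is a submonoid closed under conjugation in $G$. A morphism $(f,\bar f)\colon (G,P_G)\to(H,P_H)$ is a group homomorphism $f$ with $f(P_G)\subseteq P_H$, $\bar f$ its restriction to positive cones; this gives the category $\mathsf{PreOrdGrp}$. Limits are computed componentwise; regular (= normal = effective descent) epimorphisms are the morphisms with $f$ and $\bar f$ both surjective. Let $\mathsf{Mono(Ab)}$ denote the full subcategory of preordered groups $(G,P_G)$ with $G$ abelian and $P_G$ a subgroup. The inclusion $U\colon\mathsf{Mono(Ab)}\to\mathsf{PreOrdGrp}$ has a left adjoint $F$ with $F(G,P_G)=(G/[G,G],\ \{x-y : x,y\in\eta_G(P_G)\})$, where $\eta_G\colon G\to G/[G,G]$ is the abelianization quotient (the second component is the group completion of the monoid $\eta_G(P_G)$), and unit component $(G,P_G)\to UF(G,P_G)$ given by $\eta_G$. The Galois structure $\Gamma$ uses as extensions the regular epimorphisms. A regular epimorphism $(f,\bar f)\colon X\to Y$ is a $\Gamma$-trivial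 extension if the square formed by $(f,\bar f)$, the unit components $X\to UF(X)$, $Y\to UF(Y)$ and $UF(f,\bar f)$ is a pullback in $\mathsf{PreOrdGrp}$; it is a $\Gamma$-central extension if there is a regular epimorphism $p\colon E\to Y$ such that the pullback of $(f,\bar f)$ along $p$ is a $\Gamma$-trivial extension; it is a $\Gamma$-normal extension if the first projection of its kernel pair is a $\Gamma$-trivial extension. A split epimorphism of monoids $f\colon X\to Y$ with section $s$ and kernel $K=f^{-1}(0)$ is homogeneous if for every $y\in Y$ the maps $K\to f^{-1}(y)$, $x\mapsto x+s(y)$ and $x\mapsto s(y)+x$, are bijections. A surjective monoid homomorphism $f\colon X\to Y$ is a special homogeneous surjection if the first projection $\pi_1\colon Eq(f)\to X$ of its kernel pair $Eq(f)=\{(x,x')\in X\times X : f(x)=f(x')\}$, with section the diagonal $x\mapsto(x,x)$, is a homogeneous split epimorphism. *)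

theory Defs
  imports "HOL-Algebra.Algebra"
begin

text \<open>Preordered groups: a group G (HOL-Algebra record, written multiplicatively)
  together with a positive cone P: a submonoid of G closed under conjugation.\<close>

definition preordered_group :: "'a monoid \<Rightarrow> 'a set \<Rightarrow> bool" where
  "preordered_group G P \<longleftrightarrow> group G \<and> submonoid P G \<and>
     (\<forall>g\<in>carrier G. \<forall>p\<in>P. g \<otimes>\<^bsub>G\<^esub> p \<otimes>\<^bsub>G\<^esub> inv\<^bsub>G\<^esub> g \<in> P)"

definition preord_morphism :: "'a monoid \<Rightarrow> 'a set \<Rightarrow> 'b monoid \<Rightarrow> 'b set \<Rightarrow> ('a \<Rightarrow> 'b) \<Rightarrow> bool" where
  "preord_morphism G P H Q f \<longleftrightarrow> f \<in> hom G H \<and> f ` P \<subseteq> Q"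

definition regular_epi :: "'a monoid \<Rightarrow> 'a set \<Rightarrow> 'b monoid \<Rightarrow> 'b set \<Rightarrow> ('a \<Rightarrow> 'b) \<Rightarrow> bool" where
  "regular_epi G P H Q f \<longleftrightarrow> preord_morphism G P H Q f \<and> f ` carrier G = carrier H \<and> f ` P = Q"

text \<open>A commutative square  X --f--> A, X --g--> B, A --h--> C, B --k--> C
  is a pullback in PreOrdGrp (limits computed componentwise): the comparison map
  into the componentwise pullback is bijective on groups and on positive cones.\<close>
definition is_pullback ::
  "'x monoid \<Rightarrow> 'x set \<Rightarrow> 'a monoid \<Rightarrow> 'a set \<Rightarrow> 'b monoid \<Rightarrow> 'b set \<Rightarrow>
   ('x \<Rightarrow> 'a) \<Rightarrow> ('x \<Rightarrow> 'b) \<Rightarrow> ('a \<Rightarrow> 'c) \<Rightarrow> ('b \<Rightarrow> 'c) \<Rightarrow> bool" where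
  "is_pullback XX PX A PA B PB f g hh kk \<longleftrightarrow>
     (\<forall>x\<in>carrier XX. hh (f x) = kk (g x)) \<and>
     bij_betw (\<lambda>x. (f x, g x)) (carrier XX) {(a, b). a \<in> carrier A \<and> b \<in> carrier B \<and> hh a = kk b} \<and>
     bij_betw (\<lambda>x. (f x, g x)) PX {(a, b). a \<in> PA \<and> b \<in> PB \<and> hh a = kk b}"

text \<open>Abelianization: G/[G,G], the unit eta_G, the positive cone of F(G,P)
  (group completion of eta_G(P)) and the induced map UF(f).\<close>

definition abelianization :: "'a monoid \<Rightarrow> 'a set monoid" where
  "abelianization G = G Mod (derived G (carrier G))"

definition ab_eta :: "'a monoid \<Rightarrow> 'a \<Rightarrow> 'a set" where
  "ab_eta G x = derived G (carrier G) #>\<^bsub>G\<^esub> x"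

definition ab_cone :: "'a monoid \<Rightarrow> 'a set \<Rightarrow> 'a set set" where
  "ab_cone G P = {x \<otimes>\<^bsub>abelianization G\<^esub> inv\<^bsub>abelianization G\<^esub> y | x y.
                    x \<in> ab_eta G ` P \<and> y \<in> ab_eta G ` P}"

definition ab_map :: "'a monoid \<Rightarrow> 'b monoid \<Rightarrow> ('a \<Rightarrow> 'b) \<Rightarrow> 'a set \<Rightarrow> 'b set" where
  "ab_map G H f C = ab_eta H (f (SOME x. x \<in> C))"

definition trivial_ext :: "'a monoid \<Rightarrow> 'a set \<Rightarrow> 'b monoid \<Rightarrow> 'b set \<Rightarrow> ('a \<Rightarrow> 'b) \<Rightarrow> bool" where
  "trivial_ext G P H Q f \<longleftrightarrow> regular_epi G P H Q f \<and>
     is_pullback G P H Q (abelianization G) (ab_cone G P)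
       f (ab_eta G) (ab_eta H) (ab_map G H f)"

definition pb_group :: "'e monoid \<Rightarrow> 'a monoid \<Rightarrow> ('e \<Rightarrow> 'b) \<Rightarrow> ('a \<Rightarrow> 'b) \<Rightarrow> ('e \<times> 'a) monoid" where
  "pb_group E G p f = (DirProd E G)\<lparr>carrier := {(e, x). e \<in> carrier E \<and> x \<in> carrier G \<and> p e = f x}\<rparr>"

definition pb_cone :: "'e set \<Rightarrow> 'a set \<Rightarrow> ('e \<Rightarrow> 'b) \<Rightarrow> ('a \<Rightarrow> 'b) \<Rightarrow> ('e \<times> 'a) set" where
  "pb_cone R P p f = {(e, x). e \<in> R \<and> x \<in> P \<and> p e = f x}"

text \<open>Gamma-central extension, with the witnessing object E ranging over
  preordered groups whose elements have type 'e (fixed via the TYPE argument).\<close>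
definition central_ext :: "'e itself \<Rightarrow> 'a monoid \<Rightarrow> 'a set \<Rightarrow> 'b monoid \<Rightarrow> 'b set \<Rightarrow> ('a \<Rightarrow> 'b) \<Rightarrow> bool" where
  "central_ext (_ :: 'e itself) G P H Q f \<longleftrightarrow> regular_epi G P H Q f \<and>
     (\<exists>(E :: 'e monoid) R p. preordered_group E R \<and> regular_epi E R H Q p \<and>
        trivial_ext (pb_group E G p f) (pb_cone R P p f) E R fst)"

definition normal_ext :: "'a monoid \<Rightarrow> 'a set \<Rightarrow> 'b monoid \<Rightarrow> 'b set \<Rightarrow> ('a \<Rightarrow> 'b) \<Rightarrow> bool" where
  "normal_ext G P H Q f \<longleftrightarrow> regular_epi G P H Q f \<and>
     trivial_ext (pb_group G G f f) (pb_cone P P f f) G P fst"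

definition homogeneous_split_epi :: "('x, 'm) monoid_scheme \<Rightarrow> ('y, 'n) monoid_scheme \<Rightarrow> ('x \<Rightarrow> 'y) \<Rightarrow> ('y \<Rightarrow> 'x) \<Rightarrow> bool" where
  "homogeneous_split_epi MM NN f s \<longleftrightarrow>
     f \<in> hom MM NN \<and> s \<in> hom NN MM \<and> (\<forall>y\<in>carrier NN. f (s y) = y) \<and>
     (\<forall>y\<in>carrier NN.
        bij_betw (\<lambda>k. k \<otimes>\<^bsub>MM\<^esub> s y) {k\<in>carrier MM. f k = \<one>\<^bsub>NN\<^esub>} {x\<in>carrier MM. f x = y} \<and>
        bij_betw (\<lambda>k. s y \<otimes>\<^bsub>MM\<^esub> k) {k\<in>carrier MM. f k = \<one>\<^bsub>NN\<^esub>} {x\<in>carrier MM. f x = y})"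

definition kernel_pair_monoid :: "('x, 'm) monoid_scheme \<Rightarrow> ('x \<Rightarrow> 'y) \<Rightarrow> ('x \<times> 'x) monoid" where
  "kernel_pair_monoid MM f = (DirProd MM MM)\<lparr>carrier := {(x, x'). x \<in> carrier MM \<and> x' \<in> carrier MM \<and> f x = f x'}\<rparr>"

definition special_homogeneous_surj :: "('x, 'm) monoid_scheme \<Rightarrow> ('y, 'n) monoid_scheme \<Rightarrow> ('x \<Rightarrow> 'y) \<Rightarrow> bool" where
  "special_homogeneous_surj MM NN f \<longleftrightarrow> f \<in> hom MM NN \<and> f ` carrier MM = carrier NN \<and>
     homogeneous_split_epi (kernel_pair_monoid MM f) MM fst (\<lambda>x. (x, x))"

definition group_center :: "'a monoid \<Rightarrow> 'a set" where
  "group_center G = {z \<in> carrier G. \<forall>g\<in>carrier G. z \<otimes>\<^bsub>G\<^esub> g = g \<otimes>\<^bsub>G\<^esub> z}"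

end

theory Submission
  imports Defs
begin

text \<open>Triviality of an extension \<pi> : M \<rightarrow> B is bijectivity, on groups and on positive cones,
  of the comparison map x \<mapsto> (\<pi> x, [x]) into the pullback of B and the abelianization of M
  over the abelianization of B.
  On groups, injectivity says that no non-trivial element of [M, M] lies over 1, and surjectivity
  is automatic when \<pi> is split. For the pullback of f along any regular epimorphism, the commutator
  of (1, k) and (e, g) with k \<in> ker f lies over 1, so triviality forces ker f to be central;
  lifting the positive class of (r, x)(r, y)\<inverse> forces x y\<inverse>, hence y\<inverse> x, into P_G whenever
  f x = f y, and this fibre condition is exactly special homogeneity of P_G \<rightarrow> P_H. Conversely,
  if ker f is central then the derived subgroup of the kernel pair is diagonal, which gives
  injectivity for its first projection, and the fibre condition lets every positive class be
  lifted: so (1) gives normality, and a normal extension is central via its own kernel pair.\<close>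

lemma preordered_groupD:
  assumes "preordered_group G P"
  shows "group G" and "P \<subseteq> carrier G" and "\<one>\<^bsub>G\<^esub> \<in> P"
    and "\<And>x y. x \<in> P \<Longrightarrow> y \<in> P \<Longrightarrow> x \<otimes>\<^bsub>G\<^esub> y \<in> P"
    and "\<And>g x. g \<in> carrier G \<Longrightarrow> x \<in> P \<Longrightarrow> g \<otimes>\<^bsub>G\<^esub> x \<otimes>\<^bsub>G\<^esub> inv\<^bsub>G\<^esub> g \<in> P"
  using assms unfolding preordered_group_def submonoid_def by auto

lemma regular_epiD:
  assumes "regular_epi G P H Q f"
  shows "f \<in> hom G H" and "f ` carrier G = carrier H" and "f ` P = Q"
  using assms unfolding regular_epi_def preord_morphism_def by auto

lemma regular_epi_group_hom:
  assumes "preordered_group G P" and "preordered_group H Q" and "regular_epi G P H Q f"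
  shows "group_hom G H f"
  using assms by (simp add: group_hom_def group_hom_axioms_def preordered_groupD(1) regular_epiD(1))

lemma (in group) mult_inv_cancel_left [simp]:
  "x \<in> carrier G \<Longrightarrow> y \<in> carrier G \<Longrightarrow> x \<otimes> (inv x \<otimes> y) = y"
  by (simp add: m_assoc[symmetric])

lemma (in group) inv_mult_cancel_left [simp]:
  "x \<in> carrier G \<Longrightarrow> y \<in> carrier G \<Longrightarrow> inv x \<otimes> (x \<otimes> y) = y"
  by (simp add: m_assoc[symmetric])

lemma (in group) commutator_eq_one_imp_commute:
  assumes "a \<in> carrier G" "b \<in> carrier G" "a \<otimes> b \<otimes> inv a \<otimes> inv b = \<one>"
  shows "a \<otimes> b = b \<otimes> a"
proof -
  have "a \<otimes> b = a \<otimes> b \<otimes> inv a \<otimes> inv b \<otimes> b \<otimes> a"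
    using assms(1,2) by (simp add: m_assoc)
  then show ?thesis using assms by simp
qed

lemma (in group) commutator_mult_central:
  assumes "a \<in> carrier G" "c \<in> carrier G" "k \<in> carrier G" "l \<in> carrier G"
    and "\<And>g. g \<in> carrier G \<Longrightarrow> k \<otimes> g = g \<otimes> k" "\<And>g. g \<in> carrier G \<Longrightarrow> l \<otimes> g = g \<otimes> l"
  shows "(a \<otimes> k) \<otimes> (c \<otimes> l) \<otimes> inv (a \<otimes> k) \<otimes> inv (c \<otimes> l) = a \<otimes> c \<otimes> inv a \<otimes> inv c"
proof -
  have cl: "c \<otimes> l \<in> carrier G" using assms by simp
  have kcl: "k \<otimes> (c \<otimes> l) = c \<otimes> l \<otimes> k" and lia: "l \<otimes> inv a = inv a \<otimes> l"
    using assms by simp_all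
  have "(a \<otimes> k) \<otimes> (c \<otimes> l) \<otimes> inv (a \<otimes> k) \<otimes> inv (c \<otimes> l)
      = a \<otimes> (k \<otimes> (c \<otimes> l)) \<otimes> (inv k \<otimes> inv a) \<otimes> inv (c \<otimes> l)"
    using assms(1,3) cl by (simp add: m_assoc inv_mult_group)
  also have "\<dots> = a \<otimes> (c \<otimes> l) \<otimes> (k \<otimes> inv k) \<otimes> inv a \<otimes> inv (c \<otimes> l)"
    using assms(1,3) cl by (simp add: kcl m_assoc)
  also have "\<dots> = a \<otimes> c \<otimes> (l \<otimes> inv a) \<otimes> (inv l \<otimes> inv c)"
    using assms(1-4) by (simp add: m_assoc inv_mult_group)
  also have "\<dots> = a \<otimes> c \<otimes> inv a \<otimes> (l \<otimes> inv l) \<otimes> inv c"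
    using assms(1-4) by (simp add: lia m_assoc)
  finally show ?thesis using assms(1-4) by simp
qed

section \<open>Pullbacks of groups\<close>

lemma pb_group_carrier [simp]:
  "carrier (pb_group E G p f) = {(e, x). e \<in> carrier E \<and> x \<in> carrier G \<and> p e = f x}"
  by (simp add: pb_group_def)

lemma pb_group_mult [simp]:
  "(a, b) \<otimes>\<^bsub>pb_group E G p f\<^esub> (c, d) = (a \<otimes>\<^bsub>E\<^esub> c, b \<otimes>\<^bsub>G\<^esub> d)"
  by (simp add: pb_group_def)

lemma pb_group_one [simp]: "\<one>\<^bsub>pb_group E G p f\<^esub> = (\<one>\<^bsub>E\<^esub>, \<one>\<^bsub>G\<^esub>)"
  by (simp add: pb_group_def)

lemma subgroup_pb_group_carrier:
  assumes "group_hom E H p" "group_hom G H f"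
  shows "subgroup (carrier (pb_group E G p f)) (E \<times>\<times> G)"
proof -
  interpret p: group_hom E H p by fact
  interpret f: group_hom G H f by fact
  show ?thesis
    by (rule subgroup.intro) auto
qed

lemma group_pb_group:
  assumes "group_hom E H p" "group_hom G H f"
  shows "group (pb_group E G p f)"
proof -
  have "group (E \<times>\<times> G)" using assms by (simp add: DirProd_group group_hom_def)
  then show ?thesis
    using subgroup.subgroup_is_group[OF subgroup_pb_group_carrier[OF assms]] by (simp add: pb_group_def)
qed

lemma pb_group_inv [simp]:
  assumes "group_hom E H p" "group_hom G H f" "(a, b) \<in> carrier (pb_group E G p f)"
  shows "inv\<^bsub>pb_group E G p f\<^esub> (a, b) = (inv\<^bsub>E\<^esub> a, inv\<^bsub>G\<^esub> b)"
proof -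
  have groups: "group E" "group G" using assms(1,2) by (simp_all add: group_hom_def)
  have "inv\<^bsub>pb_group E G p f\<^esub> (a, b) = inv\<^bsub>E \<times>\<times> G\<^esub> (a, b)"
    using group.m_inv_consistent[OF DirProd_group[OF groups] subgroup_pb_group_carrier[OF assms(1,2)]]
      assms(3) by (simp add: pb_group_def)
  then show ?thesis using assms(3) groups by simp
qed

lemma fst_hom_pb_group: "fst \<in> hom (pb_group E G p f) E"
  by (auto simp: hom_def)

lemma group_hom_pb_group_fst:
  assumes "group_hom E H p" "group_hom G H f"
  shows "group_hom (pb_group E G p f) E fst"
  using group_pb_group[OF assms] assms fst_hom_pb_group
  by (simp add: group_hom_def group_hom_axioms_def)

lemma diagonal_hom_kernel_pair: "(\<lambda>x. (x, x)) \<in> hom G (pb_group G G f f)"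
  by (auto simp: hom_def)

lemma group_hom_kernel_pair_diagonal:
  assumes "group_hom G H f"
  shows "group_hom G (pb_group G G f f) (\<lambda>x. (x, x))"
  using group_pb_group[OF assms assms] assms diagonal_hom_kernel_pair
  by (simp add: group_hom_def group_hom_axioms_def)

lemma pb_cone_subset_carrier:
  "R \<subseteq> carrier E \<Longrightarrow> P \<subseteq> carrier G \<Longrightarrow> pb_cone R P p f \<subseteq> carrier (pb_group E G p f)"
  by (auto simp: pb_cone_def)

section \<open>Abelianization\<close>

lemma group_abelianization: "group M \<Longrightarrow> group (abelianization M)"
  unfolding abelianization_def by (rule group.derived_quot_is_group)

lemma ab_eta_hom: "group M \<Longrightarrow> ab_eta M \<in> hom M (abelianization M)"
  unfolding abelianization_def ab_eta_def[abs_def]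
  by (rule normal.r_coset_hom_Mod[OF group.derived_self_is_normal])

lemma group_hom_ab_eta: "group M \<Longrightarrow> group_hom M (abelianization M) (ab_eta M)"
  by (simp add: group_hom_def group_hom_axioms_def group_abelianization ab_eta_hom)

lemma abelianization_carrierE:
  assumes "C \<in> carrier (abelianization M)"
  obtains x where "x \<in> carrier M" "C = ab_eta M x"
  using assms unfolding abelianization_def ab_eta_def carrier_FactGroup by blast

lemma ab_eta_eq_iff:
  assumes "group M" "x \<in> carrier M" "y \<in> carrier M"
  shows "ab_eta M x = ab_eta M y \<longleftrightarrow> x \<otimes>\<^bsub>M\<^esub> inv\<^bsub>M\<^esub> y \<in> derived M (carrier M)"
proof -
  interpret M: group M by fact
  have sg: "subgroup (derived M (carrier M)) M" by (simp add: M.derived_is_subgroup)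
  show ?thesis unfolding ab_eta_def
    using M.repr_independence[OF _ assms(3) sg] M.repr_independenceD[OF sg assms(2)]
      subgroup.rcos_module[OF sg assms(1) assms(3) assms(2)]
    by metis
qed

lemma ab_eta_derived_mult:
  assumes "group M" "d \<in> derived M (carrier M)" "x \<in> carrier M"
  shows "ab_eta M (d \<otimes>\<^bsub>M\<^esub> x) = ab_eta M x"
proof -
  interpret M: group M by fact
  have "d \<in> carrier M" using assms(2) M.derived_in_carrier by blast
  then show ?thesis using ab_eta_eq_iff[OF assms(1) M.m_closed assms(3)] assms(2,3)
    by (simp add: M.m_assoc)
qed

lemma (in group_hom) hom_derived_closed:
  assumes "d \<in> derived G (carrier G)"
  shows "h d \<in> derived H (carrier H)"
proof -
  have "h ` carrier G \<subseteq> carrier H" by auto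
  then show ?thesis using assms derived_img[of "carrier G"] H.mono_derived by blast
qed

text \<open>ab_map picks its representative with SOME; the choice is irrelevant because \<phi>
  maps [M, M] into [Y, Y].\<close>

lemma ab_map_eta:
  assumes "group_hom M Y \<phi>" "x \<in> carrier M"
  shows "ab_map M Y \<phi> (ab_eta M x) = ab_eta Y (\<phi> x)"
proof -
  interpret group_hom M Y \<phi> by fact
  have sg: "subgroup (derived M (carrier M)) M" by (simp add: G.derived_is_subgroup)
  define w where "w = (SOME w. w \<in> ab_eta M x)"
  have "x \<in> ab_eta M x" unfolding ab_eta_def by (rule G.rcos_self[OF assms(2) sg])
  then have w: "w \<in> derived M (carrier M) #>\<^bsub>M\<^esub> x"
    unfolding w_def ab_eta_def by (rule someI)
  have wc: "w \<in> carrier M"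
    by (rule subgroup.elemrcos_carrier[OF sg G.group_axioms assms(2) w])
  have "\<phi> (w \<otimes>\<^bsub>M\<^esub> inv\<^bsub>M\<^esub> x) \<in> derived Y (carrier Y)"
    by (rule hom_derived_closed[OF subgroup.rcos_module_imp[OF sg G.group_axioms assms(2) w]])
  then have "ab_eta Y (\<phi> w) = ab_eta Y (\<phi> x)"
    using ab_eta_eq_iff[OF H.group_axioms] wc assms(2) by simp
  then show ?thesis unfolding ab_map_def w_def[symmetric] .
qed

lemma ab_coneI:
  assumes "group M" "PM \<subseteq> carrier M" "u \<in> PM" "v \<in> PM"
  shows "ab_eta M (u \<otimes>\<^bsub>M\<^esub> inv\<^bsub>M\<^esub> v) \<in> ab_cone M PM"
proof -
  interpret group_hom M "abelianization M" "ab_eta M" by (rule group_hom_ab_eta[OF assms(1)])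
  have "u \<in> carrier M" "v \<in> carrier M" using assms(2-4) by auto
  then have "ab_eta M (u \<otimes>\<^bsub>M\<^esub> inv\<^bsub>M\<^esub> v)
      = ab_eta M u \<otimes>\<^bsub>abelianization M\<^esub> inv\<^bsub>abelianization M\<^esub> ab_eta M v
    \<and> ab_eta M u \<in> ab_eta M ` PM \<and> ab_eta M v \<in> ab_eta M ` PM"
    using assms(3,4) by simp
  then show ?thesis unfolding ab_cone_def by blast
qed

lemma ab_coneE:
  assumes "group M" "PM \<subseteq> carrier M" "c \<in> ab_cone M PM"
  obtains u v where "u \<in> PM" "v \<in> PM" "c = ab_eta M (u \<otimes>\<^bsub>M\<^esub> inv\<^bsub>M\<^esub> v)"
proof -
  interpret group_hom M "abelianization M" "ab_eta M" by (rule group_hom_ab_eta[OF assms(1)])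
  obtain u v where "u \<in> PM" "v \<in> PM"
    "c = ab_eta M u \<otimes>\<^bsub>abelianization M\<^esub> inv\<^bsub>abelianization M\<^esub> ab_eta M v"
    using assms(3) unfolding ab_cone_def by blast
  moreover have "u \<in> carrier M" "v \<in> carrier M" using calculation(1,2) assms(2) by auto
  ultimately show ?thesis using that by simp
qed

section \<open>Trivial extensions\<close>

lemma trivial_ext_inj:
  assumes "trivial_ext M PM B PB \<pi>" "x \<in> carrier M" "y \<in> carrier M"
    and "\<pi> x = \<pi> y" "ab_eta M x = ab_eta M y"
  shows "x = y"
proof -
  have "inj_on (\<lambda>x. (\<pi> x, ab_eta M x)) (carrier M)"
    using assms(1) unfolding trivial_ext_def is_pullback_def bij_betw_def by blast
  then show ?thesis using assms(2-5) by (auto dest: inj_onD)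
qed

lemma trivial_ext_cone_lift:
  assumes "trivial_ext M PM B PB \<pi>" "b \<in> PB" "c \<in> ab_cone M PM" "ab_eta B b = ab_map M B \<pi> c"
  obtains x where "x \<in> PM" "\<pi> x = b" "ab_eta M x = c"
proof -
  have "(\<lambda>x. (\<pi> x, ab_eta M x)) ` PM
      = {(a, b). a \<in> PB \<and> b \<in> ab_cone M PM \<and> ab_eta B a = ab_map M B \<pi> b}"
    using assms(1) unfolding trivial_ext_def is_pullback_def bij_betw_def by blast
  then have "(b, c) \<in> (\<lambda>x. (\<pi> x, ab_eta M x)) ` PM" using assms(2-4) by simp
  then show ?thesis using that by force
qed

lemma derived_lift:
  assumes "group_hom M B \<pi>" "derived B (carrier B) \<subseteq> \<pi> ` derived M (carrier M)"
    and "m \<in> carrier M" "b \<in> carrier B" "ab_eta B b = ab_eta B (\<pi> m)"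
  obtains d where "d \<in> derived M (carrier M)" "\<pi> (d \<otimes>\<^bsub>M\<^esub> m) = b"
proof -
  interpret group_hom M B \<pi> by fact
  have "b \<otimes>\<^bsub>B\<^esub> inv\<^bsub>B\<^esub> \<pi> m \<in> derived B (carrier B)"
    using ab_eta_eq_iff[OF H.group_axioms assms(4) hom_closed[OF assms(3)]] assms(5)
    by (rule iffD1)
  then have "b \<otimes>\<^bsub>B\<^esub> inv\<^bsub>B\<^esub> \<pi> m \<in> \<pi> ` derived M (carrier M)"
    by (rule subsetD[OF assms(2)])
  then obtain d where d: "d \<in> derived M (carrier M)" "\<pi> d = b \<otimes>\<^bsub>B\<^esub> inv\<^bsub>B\<^esub> \<pi> m"
    by (metis imageE)
  have "d \<in> carrier M" using G.derived_in_carrier[OF subset_refl] d(1) by (rule subsetD)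
  then have "\<pi> (d \<otimes>\<^bsub>M\<^esub> m) = b"
    using d(2) assms(3,4) by (simp add: H.m_assoc)
  then show ?thesis using that d(1) by blast
qed

lemma derived_subset_image_derived:
  assumes "group_hom B M s" "\<And>b. b \<in> carrier B \<Longrightarrow> \<pi> (s b) = b"
  shows "derived B (carrier B) \<subseteq> \<pi> ` derived M (carrier M)"
proof
  interpret s: group_hom B M s by fact
  fix d assume d: "d \<in> derived B (carrier B)"
  have "\<pi> (s d) = d" using assms(2) s.G.derived_in_carrier[OF subset_refl] d by blast
  then show "d \<in> \<pi> ` derived M (carrier M)" using s.hom_derived_closed[OF d] by force
qed

lemma pullback_comparison_inj:
  assumes "group_hom M B \<pi>"
    and "\<And>x. x \<in> derived M (carrier M) \<Longrightarrow> \<pi> x = \<one>\<^bsub>B\<^esub> \<Longrightarrow> x = \<one>\<^bsub>M\<^esub>"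
  shows "inj_on (\<lambda>x. (\<pi> x, ab_eta M x)) (carrier M)"
proof (rule inj_onI)
  interpret group_hom M B \<pi> by fact
  fix x y assume x: "x \<in> carrier M" and y: "y \<in> carrier M"
    and eq: "(\<pi> x, ab_eta M x) = (\<pi> y, ab_eta M y)"
  have "x \<otimes>\<^bsub>M\<^esub> inv\<^bsub>M\<^esub> y \<in> derived M (carrier M)"
    using eq ab_eta_eq_iff[OF G.group_axioms x y] by simp
  moreover have "\<pi> (x \<otimes>\<^bsub>M\<^esub> inv\<^bsub>M\<^esub> y) = \<one>\<^bsub>B\<^esub>" using eq x y by simp
  ultimately have "x \<otimes>\<^bsub>M\<^esub> inv\<^bsub>M\<^esub> y = \<one>\<^bsub>M\<^esub>" by (rule assms(2))
  moreover have "x = x \<otimes>\<^bsub>M\<^esub> inv\<^bsub>M\<^esub> y \<otimes>\<^bsub>M\<^esub> y" using x y by (simp add: G.m_assoc)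
  ultimately show "x = y" using y by simp
qed

lemma pullback_comparison_image:
  assumes "group_hom M B \<pi>" "derived B (carrier B) \<subseteq> \<pi> ` derived M (carrier M)"
  shows "(\<lambda>x. (\<pi> x, ab_eta M x)) ` carrier M
    = {(b, c). b \<in> carrier B \<and> c \<in> carrier (abelianization M) \<and> ab_eta B b = ab_map M B \<pi> c}"
proof (intro equalityI subsetI)
  interpret group_hom M B \<pi> by fact
  fix z assume "z \<in> (\<lambda>x. (\<pi> x, ab_eta M x)) ` carrier M"
  then show "z \<in> {(b, c). b \<in> carrier B \<and> c \<in> carrier (abelianization M) \<and> ab_eta B b = ab_map M B \<pi> c}"
    using ab_map_eta[OF assms(1)] group_hom.hom_closed[OF group_hom_ab_eta[OF G.group_axioms]] by auto
next
  interpret group_hom M B \<pi> by fact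
  fix z assume "z \<in> {(b, c). b \<in> carrier B \<and> c \<in> carrier (abelianization M) \<and> ab_eta B b = ab_map M B \<pi> c}"
  then obtain b c where z: "z = (b, c)" "b \<in> carrier B" "c \<in> carrier (abelianization M)"
    "ab_eta B b = ab_map M B \<pi> c" by blast
  obtain m where m: "m \<in> carrier M" "c = ab_eta M m" using z(3) by (rule abelianization_carrierE)
  have "ab_eta B b = ab_eta B (\<pi> m)" using z(4) m ab_map_eta[OF assms(1)] by simp
  then obtain d where d: "d \<in> derived M (carrier M)" "\<pi> (d \<otimes>\<^bsub>M\<^esub> m) = b"
    using derived_lift[OF assms m(1) z(2)] by blast
  have "ab_eta M (d \<otimes>\<^bsub>M\<^esub> m) = c" using ab_eta_derived_mult[OF G.group_axioms d(1) m(1)] m(2) by simp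
  moreover have "d \<otimes>\<^bsub>M\<^esub> m \<in> carrier M" using d(1) m(1) G.derived_in_carrier by blast
  ultimately show "z \<in> (\<lambda>x. (\<pi> x, ab_eta M x)) ` carrier M" using z(1) d(2) by force
qed

lemma trivial_extI:
  assumes "group_hom M B \<pi>" "regular_epi M PM B PB \<pi>" "PM \<subseteq> carrier M" "\<one>\<^bsub>M\<^esub> \<in> PM"
    and "\<And>x. x \<in> derived M (carrier M) \<Longrightarrow> \<pi> x = \<one>\<^bsub>B\<^esub> \<Longrightarrow> x = \<one>\<^bsub>M\<^esub>"
    and "derived B (carrier B) \<subseteq> \<pi> ` derived M (carrier M)"
    and cone_lift: "\<And>b c. \<lbrakk>b \<in> PB; c \<in> ab_cone M PM; ab_eta B b = ab_map M B \<pi> c\<rbrakk>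
      \<Longrightarrow> \<exists>x\<in>PM. \<pi> x = b \<and> ab_eta M x = c"
  shows "trivial_ext M PM B PB \<pi>"
proof -
  interpret group_hom M B \<pi> by fact
  let ?cmp = "\<lambda>x. (\<pi> x, ab_eta M x)"
  let ?C = "{(b, c). b \<in> PB \<and> c \<in> ab_cone M PM \<and> ab_eta B b = ab_map M B \<pi> c}"
  have inj: "inj_on ?cmp (carrier M)"
    using pullback_comparison_inj assms(1,5) by blast
  have "?cmp ` PM = ?C"
  proof (intro equalityI subsetI)
    fix z assume "z \<in> ?cmp ` PM"
    then obtain x where x: "x \<in> PM" "z = ?cmp x" by blast
    have "x \<in> carrier M" using x(1) assms(3) by blast
    then have "ab_eta M x \<in> ab_cone M PM"
      using ab_coneI[OF G.group_axioms assms(3) x(1) assms(4)] by simp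
    then show "z \<in> ?C"
      using x regular_epiD(3)[OF assms(2)] ab_map_eta[OF assms(1) \<open>x \<in> carrier M\<close>] by blast
  next
    fix z assume "z \<in> ?C"
    then show "z \<in> ?cmp ` PM" using cone_lift by force
  qed
  then have "bij_betw ?cmp PM ?C"
    unfolding bij_betw_def using inj_on_subset[OF inj assms(3)] by blast
  moreover have "bij_betw ?cmp (carrier M)
      {(b, c). b \<in> carrier B \<and> c \<in> carrier (abelianization M) \<and> ab_eta B b = ab_map M B \<pi> c}"
    unfolding bij_betw_def using inj pullback_comparison_image[OF assms(1,6)] by blast
  moreover have "\<forall>x\<in>carrier M. ab_eta B (\<pi> x) = ab_map M B \<pi> (ab_eta M x)"
    using ab_map_eta[OF assms(1)] by simp
  ultimately show ?thesis
    unfolding trivial_ext_def is_pullback_def using assms(2) by blast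
qed

section \<open>Special homogeneous surjections of positive cones\<close>

definition fibre_quotients_in_cone :: "'a monoid \<Rightarrow> 'a set \<Rightarrow> ('a \<Rightarrow> 'b) \<Rightarrow> bool" where
  "fibre_quotients_in_cone G P f \<longleftrightarrow> (\<forall>x\<in>P. \<forall>y\<in>P. f x = f y \<longrightarrow> inv\<^bsub>G\<^esub> y \<otimes>\<^bsub>G\<^esub> x \<in> P)"

lemma kernel_pair_monoid_carrier [simp]:
  "carrier (kernel_pair_monoid (G\<lparr>carrier := P\<rparr>) f) = {(x, x'). x \<in> P \<and> x' \<in> P \<and> f x = f x'}"
  by (simp add: kernel_pair_monoid_def)

lemma kernel_pair_monoid_mult [simp]:
  "(a, b) \<otimes>\<^bsub>kernel_pair_monoid (G\<lparr>carrier := P\<rparr>) f\<^esub> (c, d) = (a \<otimes>\<^bsub>G\<^esub> c, b \<otimes>\<^bsub>G\<^esub> d)"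
  by (simp add: kernel_pair_monoid_def)

lemma kernel_pair_monoid_left_translation_bij:
  assumes "preordered_group G P" "group_hom G H f" "y \<in> P"
    and "\<And>x. x \<in> P \<Longrightarrow> f x = f y \<Longrightarrow> inv\<^bsub>G\<^esub> y \<otimes>\<^bsub>G\<^esub> x \<in> P"
  shows "bij_betw (\<lambda>k. (y, y) \<otimes>\<^bsub>kernel_pair_monoid (G\<lparr>carrier := P\<rparr>) f\<^esub> k)
    {k \<in> carrier (kernel_pair_monoid (G\<lparr>carrier := P\<rparr>) f). fst k = \<one>\<^bsub>G\<^esub>}
    {z \<in> carrier (kernel_pair_monoid (G\<lparr>carrier := P\<rparr>) f). fst z = y}"
proof -
  interpret f: group_hom G H f by fact
  note P = preordered_groupD[OF assms(1)]
  have y: "y \<in> carrier G" using assms(3) P(2) by blast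
  show ?thesis
    by (rule bij_betw_byWitness[where f' = "\<lambda>z. (\<one>\<^bsub>G\<^esub>, inv\<^bsub>G\<^esub> y \<otimes>\<^bsub>G\<^esub> snd z)"])
      (use y assms(3,4) P(3,4) subsetD[OF P(2)] in \<open>auto simp: f.G.m_assoc\<close>)
qed

lemma kernel_pair_monoid_right_translation_bij:
  assumes "preordered_group G P" "group_hom G H f" "y \<in> P"
    and "\<And>x. x \<in> P \<Longrightarrow> f x = f y \<Longrightarrow> x \<otimes>\<^bsub>G\<^esub> inv\<^bsub>G\<^esub> y \<in> P"
  shows "bij_betw (\<lambda>k. k \<otimes>\<^bsub>kernel_pair_monoid (G\<lparr>carrier := P\<rparr>) f\<^esub> (y, y))
    {k \<in> carrier (kernel_pair_monoid (G\<lparr>carrier := P\<rparr>) f). fst k = \<one>\<^bsub>G\<^esub>}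
    {z \<in> carrier (kernel_pair_monoid (G\<lparr>carrier := P\<rparr>) f). fst z = y}"
proof -
  interpret f: group_hom G H f by fact
  note P = preordered_groupD[OF assms(1)]
  have y: "y \<in> carrier G" using assms(3) P(2) by blast
  show ?thesis
    by (rule bij_betw_byWitness[where f' = "\<lambda>z. (\<one>\<^bsub>G\<^esub>, snd z \<otimes>\<^bsub>G\<^esub> inv\<^bsub>G\<^esub> y)"])
      (use y assms(3,4) P(3,4) subsetD[OF P(2)] in \<open>auto simp: f.G.m_assoc\<close>)
qed

lemma special_homogeneous_surj_imp_fibre_quotients_in_cone:
  assumes "preordered_group G P" "group_hom G H f"
    and "special_homogeneous_surj (G\<lparr>carrier := P\<rparr>) (H\<lparr>carrier := Q\<rparr>) f"
  shows "fibre_quotients_in_cone G P f"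
  unfolding fibre_quotients_in_cone_def
proof (intro ballI impI)
  interpret f: group_hom G H f by fact
  note P = preordered_groupD[OF assms(1)]
  let ?KP = "kernel_pair_monoid (G\<lparr>carrier := P\<rparr>) f"
  fix x y assume x: "x \<in> P" and y: "y \<in> P" and fxy: "f x = f y"
  have onto: "(\<lambda>k. (y, y) \<otimes>\<^bsub>?KP\<^esub> k) ` {k \<in> carrier ?KP. fst k = \<one>\<^bsub>G\<^esub>}
      = {z \<in> carrier ?KP. fst z = y}"
    using assms(3) y unfolding special_homogeneous_surj_def homogeneous_split_epi_def
    by (simp add: bij_betw_def)
  have "(y, x) \<in> {z \<in> carrier ?KP. fst z = y}" using x y fxy by simp
  then have "(y, x) \<in> (\<lambda>k. (y, y) \<otimes>\<^bsub>?KP\<^esub> k) ` {k \<in> carrier ?KP. fst k = \<one>\<^bsub>G\<^esub>}"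
    by (simp only: onto)
  then obtain b where "b \<in> P" "y \<otimes>\<^bsub>G\<^esub> b = x" by auto
  moreover have "y \<in> carrier G" "b \<in> carrier G" using y \<open>b \<in> P\<close> P(2) by auto
  ultimately show "inv\<^bsub>G\<^esub> y \<otimes>\<^bsub>G\<^esub> x \<in> P" by auto
qed

lemma fibre_quotients_in_cone_imp_special_homogeneous_surj:
  assumes "preordered_group G P" "group_hom G H f" "f ` P = Q"
    and "fibre_quotients_in_cone G P f"
  shows "special_homogeneous_surj (G\<lparr>carrier := P\<rparr>) (H\<lparr>carrier := Q\<rparr>) f"
proof -
  interpret f: group_hom G H f by fact
  note P = preordered_groupD[OF assms(1)]
  let ?KP = "kernel_pair_monoid (G\<lparr>carrier := P\<rparr>) f"
  have left: "inv\<^bsub>G\<^esub> y \<otimes>\<^bsub>G\<^esub> x \<in> P" if "x \<in> P" "y \<in> P" "f x = f y" for x y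
    using assms(4) that unfolding fibre_quotients_in_cone_def by blast
  have right: "x \<otimes>\<^bsub>G\<^esub> inv\<^bsub>G\<^esub> y \<in> P" if "x \<in> P" "y \<in> P" "f x = f y" for x y
  proof -
    have xy: "x \<in> carrier G" "y \<in> carrier G" using that P(2) by auto
    have "y \<otimes>\<^bsub>G\<^esub> (inv\<^bsub>G\<^esub> y \<otimes>\<^bsub>G\<^esub> x) \<otimes>\<^bsub>G\<^esub> inv\<^bsub>G\<^esub> y \<in> P"
      by (rule P(5)[OF xy(2) left[OF that]])
    then show ?thesis using xy by (simp add: f.G.m_assoc)
  qed
  have "f \<in> hom (G\<lparr>carrier := P\<rparr>) (H\<lparr>carrier := Q\<rparr>)"
    using assms(3) P(2) by (auto simp: hom_def subsetD)
  moreover have "fst \<in> hom ?KP (G\<lparr>carrier := P\<rparr>)" "(\<lambda>x. (x, x)) \<in> hom (G\<lparr>carrier := P\<rparr>) ?KP"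
    by (auto simp: hom_def kernel_pair_monoid_def)
  ultimately show ?thesis
    unfolding special_homogeneous_surj_def homogeneous_split_epi_def
    using assms(3) kernel_pair_monoid_left_translation_bij[OF assms(1,2)] left
      kernel_pair_monoid_right_translation_bij[OF assms(1,2)] right
    by simp
qed

lemma special_homogeneous_surj_iff_fibre_quotients_in_cone:
  assumes "preordered_group G P" "group_hom G H f" "f ` P = Q"
  shows "special_homogeneous_surj (G\<lparr>carrier := P\<rparr>) (H\<lparr>carrier := Q\<rparr>) f
    \<longleftrightarrow> fibre_quotients_in_cone G P f"
  using special_homogeneous_surj_imp_fibre_quotients_in_cone[OF assms(1,2)]
    fibre_quotients_in_cone_imp_special_homogeneous_surj[OF assms] by blast

section \<open>Kernel pairs with central kernel\<close>

lemma derived_subset_fst_image_kernel_pair: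
  assumes "group_hom G H f"
  shows "derived G (carrier G) \<subseteq> fst ` derived (pb_group G G f f) (carrier (pb_group G G f f))"
  by (rule derived_subset_image_derived[OF group_hom_kernel_pair_diagonal[OF assms]]) simp

lemma derived_kernel_pair_subset_diagonal:
  assumes "group_hom G H f" "kernel G H f \<subseteq> group_center G"
  shows "derived (pb_group G G f f) (carrier (pb_group G G f f)) \<subseteq> (\<lambda>x. (x, x)) ` carrier G"
proof -
  interpret f: group_hom G H f by fact
  let ?M = "pb_group G G f f"
  interpret M: group ?M by (rule group_pb_group[OF assms(1,1)])
  have central: "\<And>g. g \<in> carrier G \<Longrightarrow> k \<otimes>\<^bsub>G\<^esub> g = g \<otimes>\<^bsub>G\<^esub> k"
    if "k \<in> carrier G" "f k = \<one>\<^bsub>H\<^esub>" for k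
    using assms(2) that by (auto simp: kernel_def group_center_def)
  have "derived_set ?M (carrier ?M) \<subseteq> (\<lambda>x. (x, x)) ` carrier G"
  proof
    fix z assume "z \<in> derived_set ?M (carrier ?M)"
    then obtain a b c d where ab: "(a, b) \<in> carrier ?M" and cd: "(c, d) \<in> carrier ?M"
      and z: "z = (a, b) \<otimes>\<^bsub>?M\<^esub> (c, d) \<otimes>\<^bsub>?M\<^esub> inv\<^bsub>?M\<^esub> (a, b) \<otimes>\<^bsub>?M\<^esub> inv\<^bsub>?M\<^esub> (c, d)"
      by auto
    define k l where "k = inv\<^bsub>G\<^esub> a \<otimes>\<^bsub>G\<^esub> b" and "l = inv\<^bsub>G\<^esub> c \<otimes>\<^bsub>G\<^esub> d"
    have kl: "k \<in> carrier G" "f k = \<one>\<^bsub>H\<^esub>" "l \<in> carrier G" "f l = \<one>\<^bsub>H\<^esub>"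
      using ab cd by (simp_all add: k_def l_def)
    have bd: "b = a \<otimes>\<^bsub>G\<^esub> k" "d = c \<otimes>\<^bsub>G\<^esub> l"
      using ab cd by (simp_all add: k_def l_def f.G.m_assoc[symmetric])
    have "(a \<otimes>\<^bsub>G\<^esub> k) \<otimes>\<^bsub>G\<^esub> (c \<otimes>\<^bsub>G\<^esub> l) \<otimes>\<^bsub>G\<^esub> inv\<^bsub>G\<^esub> (a \<otimes>\<^bsub>G\<^esub> k) \<otimes>\<^bsub>G\<^esub> inv\<^bsub>G\<^esub> (c \<otimes>\<^bsub>G\<^esub> l)
        = a \<otimes>\<^bsub>G\<^esub> c \<otimes>\<^bsub>G\<^esub> inv\<^bsub>G\<^esub> a \<otimes>\<^bsub>G\<^esub> inv\<^bsub>G\<^esub> c"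
      using ab cd kl by (intro f.G.commutator_mult_central) (auto intro: central)
    then have "z = (a \<otimes>\<^bsub>G\<^esub> c \<otimes>\<^bsub>G\<^esub> inv\<^bsub>G\<^esub> a \<otimes>\<^bsub>G\<^esub> inv\<^bsub>G\<^esub> c, a \<otimes>\<^bsub>G\<^esub> c \<otimes>\<^bsub>G\<^esub> inv\<^bsub>G\<^esub> a \<otimes>\<^bsub>G\<^esub> inv\<^bsub>G\<^esub> c)"
      using z ab cd by (simp add: pb_group_inv[OF assms(1,1)] bd[symmetric])
    moreover have "a \<otimes>\<^bsub>G\<^esub> c \<otimes>\<^bsub>G\<^esub> inv\<^bsub>G\<^esub> a \<otimes>\<^bsub>G\<^esub> inv\<^bsub>G\<^esub> c \<in> carrier G" using ab cd by simp
    ultimately show "z \<in> (\<lambda>x. (x, x)) ` carrier G" by blast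
  qed
  moreover have "subgroup ((\<lambda>x. (x, x)) ` carrier G) ?M"
    by (rule group_hom.img_is_subgroup[OF group_hom_kernel_pair_diagonal[OF assms(1)]])
  ultimately show ?thesis unfolding derived_def by (rule M.generate_subgroup_incl)
qed

lemma kernel_pair_cone_quotient:
  assumes "preordered_group G P" "group_hom G H f" "kernel G H f \<subseteq> group_center G"
    and "fibre_quotients_in_cone G P f"
    and "(x, x') \<in> pb_cone P P f f" "(y, y') \<in> pb_cone P P f f"
  obtains z where "z \<in> P" "x' \<otimes>\<^bsub>G\<^esub> inv\<^bsub>G\<^esub> y' = x \<otimes>\<^bsub>G\<^esub> inv\<^bsub>G\<^esub> y \<otimes>\<^bsub>G\<^esub> z"
proof -
  interpret f: group_hom G H f by fact
  note P = preordered_groupD[OF assms(1)]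
  have xy: "x \<in> P" "x' \<in> P" "f x' = f x" "y \<in> P" "y' \<in> P" "f y = f y'"
    using assms(5,6) by (auto simp: pb_cone_def)
  then have c: "x \<in> carrier G" "x' \<in> carrier G" "y \<in> carrier G" "y' \<in> carrier G"
    using P(2) by auto
  define z where "z = (inv\<^bsub>G\<^esub> x \<otimes>\<^bsub>G\<^esub> x') \<otimes>\<^bsub>G\<^esub> (inv\<^bsub>G\<^esub> y' \<otimes>\<^bsub>G\<^esub> y)"
  have zP: "z \<in> P"
    using assms(4) xy P(4) unfolding fibre_quotients_in_cone_def z_def by simp
  have "z \<in> kernel G H f" using xy c by (simp add: kernel_def z_def)
  then have zc: "z \<in> carrier G" "z \<otimes>\<^bsub>G\<^esub> inv\<^bsub>G\<^esub> y = inv\<^bsub>G\<^esub> y \<otimes>\<^bsub>G\<^esub> z"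
    using assms(3) c by (auto simp: group_center_def)
  have "x \<otimes>\<^bsub>G\<^esub> inv\<^bsub>G\<^esub> y \<otimes>\<^bsub>G\<^esub> z = x \<otimes>\<^bsub>G\<^esub> (z \<otimes>\<^bsub>G\<^esub> inv\<^bsub>G\<^esub> y)"
    using c zc by (simp add: f.G.m_assoc)
  also have "\<dots> = x' \<otimes>\<^bsub>G\<^esub> inv\<^bsub>G\<^esub> y'"
    using c by (simp add: z_def f.G.m_assoc)
  finally show ?thesis using that zP by metis
qed

lemma kernel_pair_diagonal_lift:
  assumes "group_hom G H f" "kernel G H f \<subseteq> group_center G"
    and "m \<in> carrier (pb_group G G f f)" "g \<in> carrier G" "ab_eta G g = ab_eta G (fst m)"
  obtains e where "e \<in> carrier G" "e \<otimes>\<^bsub>G\<^esub> fst m = g"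
    "ab_eta (pb_group G G f f) ((e, e) \<otimes>\<^bsub>pb_group G G f f\<^esub> m) = ab_eta (pb_group G G f f) m"
proof -
  let ?M = "pb_group G G f f"
  interpret M: group ?M by (rule group_pb_group[OF assms(1,1)])
  obtain d where d: "d \<in> derived ?M (carrier ?M)" "fst (d \<otimes>\<^bsub>?M\<^esub> m) = g"
    by (rule derived_lift[OF group_hom_pb_group_fst[OF assms(1,1)]
          derived_subset_fst_image_kernel_pair[OF assms(1)] assms(3-5)])
  obtain e where e: "e \<in> carrier G" "d = (e, e)"
    using derived_kernel_pair_subset_diagonal[OF assms(1,2)] d(1) by blast
  have "ab_eta ?M (d \<otimes>\<^bsub>?M\<^esub> m) = ab_eta ?M m"
    by (rule ab_eta_derived_mult[OF M.group_axioms d(1) assms(3)])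
  then show ?thesis using that e d(2) by (cases m) simp
qed

lemma kernel_pair_cone_lift:
  assumes "preordered_group G P" "group_hom G H f" "kernel G H f \<subseteq> group_center G"
    and "fibre_quotients_in_cone G P f"
    and "p \<in> P" "c \<in> ab_cone (pb_group G G f f) (pb_cone P P f f)"
    and "ab_eta G p = ab_map (pb_group G G f f) G fst c"
  shows "\<exists>w\<in>pb_cone P P f f. fst w = p \<and> ab_eta (pb_group G G f f) w = c"
proof -
  interpret f: group_hom G H f by fact
  let ?M = "pb_group G G f f"
  interpret M: group ?M by (rule group_pb_group[OF assms(2,2)])
  note P = preordered_groupD[OF assms(1)]
  have cone: "pb_cone P P f f \<subseteq> carrier ?M" by (rule pb_cone_subset_carrier[OF P(2) P(2)])
  obtain u v where uv: "u \<in> pb_cone P P f f" "v \<in> pb_cone P P f f"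
    and c: "c = ab_eta ?M (u \<otimes>\<^bsub>?M\<^esub> inv\<^bsub>?M\<^esub> v)"
    by (rule ab_coneE[OF M.group_axioms cone assms(6)])
  obtain x x' y y' where u: "u = (x, x')" and v: "v = (y, y')" by (cases u, cases v)
  obtain z where z: "z \<in> P" "x' \<otimes>\<^bsub>G\<^esub> inv\<^bsub>G\<^esub> y' = x \<otimes>\<^bsub>G\<^esub> inv\<^bsub>G\<^esub> y \<otimes>\<^bsub>G\<^esub> z"
    using kernel_pair_cone_quotient[OF assms(1-4)] uv u v by blast
  define m where "m = u \<otimes>\<^bsub>?M\<^esub> inv\<^bsub>?M\<^esub> v"
  have uvc: "u \<in> carrier ?M" "v \<in> carrier ?M" using uv cone by auto
  have m: "m \<in> carrier ?M" "m = (x \<otimes>\<^bsub>G\<^esub> inv\<^bsub>G\<^esub> y, x' \<otimes>\<^bsub>G\<^esub> inv\<^bsub>G\<^esub> y')"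
    using uvc u v by (simp_all add: m_def pb_group_inv[OF assms(2,2)])
  have "p \<in> carrier G" using assms(5) P(2) by blast
  moreover have "ab_eta G p = ab_eta G (fst m)"
    using assms(7) ab_map_eta[OF group_hom_pb_group_fst[OF assms(2,2)] m(1)] c m_def by simp
  ultimately obtain e where e: "e \<in> carrier G" "e \<otimes>\<^bsub>G\<^esub> fst m = p"
    "ab_eta ?M ((e, e) \<otimes>\<^bsub>?M\<^esub> m) = ab_eta ?M m"
    by (rule kernel_pair_diagonal_lift[OF assms(2,3) m(1)])
  have xyz: "x \<in> carrier G" "y \<in> carrier G" "z \<in> carrier G"
    using uv u v z(1) P(2) by (auto simp: pb_cone_def)
  have "e \<otimes>\<^bsub>G\<^esub> (x' \<otimes>\<^bsub>G\<^esub> inv\<^bsub>G\<^esub> y') = e \<otimes>\<^bsub>G\<^esub> (x \<otimes>\<^bsub>G\<^esub> inv\<^bsub>G\<^esub> y) \<otimes>\<^bsub>G\<^esub> z"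
    using z(2) e(1) xyz by (simp add: f.G.m_assoc)
  then have lift: "(e, e) \<otimes>\<^bsub>?M\<^esub> m = (p, p \<otimes>\<^bsub>G\<^esub> z)" using e(2) m(2) by simp
  have "(e, e) \<otimes>\<^bsub>?M\<^esub> m \<in> carrier ?M" using e(1) m(1) by (intro M.m_closed) simp_all
  then have "(p, p \<otimes>\<^bsub>G\<^esub> z) \<in> pb_cone P P f f"
    using lift assms(5) z(1) P(4) by (simp add: pb_cone_def)
  moreover have "ab_eta ?M (p, p \<otimes>\<^bsub>G\<^esub> z) = c" using e(3) unfolding lift c m_def[symmetric] .
  ultimately show ?thesis by force
qed

lemma regular_epi_kernel_pair_fst:
  assumes "P \<subseteq> carrier G"
  shows "regular_epi (pb_group G G f f) (pb_cone P P f f) G P fst"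
proof -
  have "fst ` carrier (pb_group G G f f) = carrier G"
    by (auto intro: rev_image_eqI[of "(g, g)" for g])
  moreover have "fst ` pb_cone P P f f = P"
    by (auto simp: pb_cone_def intro: rev_image_eqI[of "(g, g)" for g])
  ultimately show ?thesis
    unfolding regular_epi_def preord_morphism_def by (simp add: fst_hom_pb_group)
qed

lemma kernel_pair_fst_trivial_ext:
  assumes "preordered_group G P" "group_hom G H f" "kernel G H f \<subseteq> group_center G"
    and "fibre_quotients_in_cone G P f"
  shows "trivial_ext (pb_group G G f f) (pb_cone P P f f) G P fst"
proof (rule trivial_extI)
  note P = preordered_groupD[OF assms(1)]
  show "group_hom (pb_group G G f f) G fst" by (rule group_hom_pb_group_fst[OF assms(2,2)])
  show "regular_epi (pb_group G G f f) (pb_cone P P f f) G P fst"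
    by (rule regular_epi_kernel_pair_fst[OF P(2)])
  show "pb_cone P P f f \<subseteq> carrier (pb_group G G f f)" by (rule pb_cone_subset_carrier[OF P(2) P(2)])
  show "\<one>\<^bsub>pb_group G G f f\<^esub> \<in> pb_cone P P f f" using P(3) by (simp add: pb_cone_def)
  show "x = \<one>\<^bsub>pb_group G G f f\<^esub>"
    if "x \<in> derived (pb_group G G f f) (carrier (pb_group G G f f))" "fst x = \<one>\<^bsub>G\<^esub>" for x
    using derived_kernel_pair_subset_diagonal[OF assms(2,3)] that by auto
  show "derived G (carrier G) \<subseteq> fst ` derived (pb_group G G f f) (carrier (pb_group G G f f))"
    by (rule derived_subset_fst_image_kernel_pair[OF assms(2)])
  show "\<exists>x\<in>pb_cone P P f f. fst x = b \<and> ab_eta (pb_group G G f f) x = c"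
    if "b \<in> P" "c \<in> ab_cone (pb_group G G f f) (pb_cone P P f f)"
      "ab_eta G b = ab_map (pb_group G G f f) G fst c" for b c
    by (rule kernel_pair_cone_lift[OF assms that])
qed

section \<open>Central extensions\<close>

lemma trivial_pullback_kernel_central:
  assumes "group_hom E H p" "group_hom G H f" "f ` carrier G \<subseteq> p ` carrier E"
    and "trivial_ext (pb_group E G p f) PM E R fst"
  shows "kernel G H f \<subseteq> group_center G"
proof
  interpret p: group_hom E H p by fact
  interpret f: group_hom G H f by fact
  let ?M = "pb_group E G p f"
  interpret M: group ?M by (rule group_pb_group[OF assms(1,2)])
  fix k assume "k \<in> kernel G H f"
  then have k: "k \<in> carrier G" "f k = \<one>\<^bsub>H\<^esub>" by (auto simp: kernel_def)
  have "k \<otimes>\<^bsub>G\<^esub> g = g \<otimes>\<^bsub>G\<^esub> k" if g: "g \<in> carrier G" for g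
  proof -
    have "f g \<in> p ` carrier E" using assms(3) g by blast
    then obtain e where e: "e \<in> carrier E" "p e = f g" by (metis imageE)
    have u: "(\<one>\<^bsub>E\<^esub>, k) \<in> carrier ?M" and v: "(e, g) \<in> carrier ?M" using k e g by simp_all
    define c where "c = (\<one>\<^bsub>E\<^esub>, k) \<otimes>\<^bsub>?M\<^esub> (e, g) \<otimes>\<^bsub>?M\<^esub> inv\<^bsub>?M\<^esub> (\<one>\<^bsub>E\<^esub>, k) \<otimes>\<^bsub>?M\<^esub> inv\<^bsub>?M\<^esub> (e, g)"
    have "c \<in> derived_set ?M (carrier ?M)" unfolding c_def by (rule UN_I[OF u], rule UN_I[OF v]) simp
    then have c: "c \<in> derived ?M (carrier ?M)" unfolding derived_def by (rule generate.incl)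
    have c_pair: "c = (\<one>\<^bsub>E\<^esub>, k \<otimes>\<^bsub>G\<^esub> g \<otimes>\<^bsub>G\<^esub> inv\<^bsub>G\<^esub> k \<otimes>\<^bsub>G\<^esub> inv\<^bsub>G\<^esub> g)"
      using u v e k g by (simp add: c_def pb_group_inv[OF assms(1,2)])
    have cc: "c \<in> carrier ?M" by (rule subsetD[OF M.derived_in_carrier[OF subset_refl] c])
    have "ab_eta ?M c = ab_eta ?M \<one>\<^bsub>?M\<^esub>"
      using ab_eta_derived_mult[OF M.group_axioms c M.one_closed] by (simp only: M.r_one[OF cc])
    then have "c = \<one>\<^bsub>?M\<^esub>"
      by (rule trivial_ext_inj[OF assms(4) cc M.one_closed, rotated]) (simp add: c_pair)
    then have "k \<otimes>\<^bsub>G\<^esub> g \<otimes>\<^bsub>G\<^esub> inv\<^bsub>G\<^esub> k \<otimes>\<^bsub>G\<^esub> inv\<^bsub>G\<^esub> g = \<one>\<^bsub>G\<^esub>" using c_pair by simp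
    then show ?thesis by (rule f.G.commutator_eq_one_imp_commute[OF k(1) g])
  qed
  then show "k \<in> group_center G" using k by (simp add: group_center_def)
qed

lemma trivial_pullback_fibre_quotients_in_cone:
  assumes "preordered_group G P" "group_hom E H p" "group_hom G H f"
    and "R \<subseteq> carrier E" "\<one>\<^bsub>E\<^esub> \<in> R" "f ` P \<subseteq> p ` R"
    and "trivial_ext (pb_group E G p f) (pb_cone R P p f) E R fst"
  shows "fibre_quotients_in_cone G P f"
  unfolding fibre_quotients_in_cone_def
proof (intro ballI impI)
  interpret p: group_hom E H p by fact
  interpret f: group_hom G H f by fact
  let ?M = "pb_group E G p f"
  interpret M: group ?M by (rule group_pb_group[OF assms(2,3)])
  note P = preordered_groupD[OF assms(1)]
  fix x y assume x: "x \<in> P" and y: "y \<in> P" and fxy: "f x = f y"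
  have "f y \<in> p ` R" using assms(6) imageI[OF y] by (rule subsetD)
  then obtain r where r: "r \<in> R" "p r = f y" by (metis imageE)
  have cone: "pb_cone R P p f \<subseteq> carrier ?M" by (rule pb_cone_subset_carrier[OF assms(4) P(2)])
  have u: "(r, x) \<in> pb_cone R P p f" and v: "(r, y) \<in> pb_cone R P p f"
    using r x y fxy by (simp_all add: pb_cone_def)
  have xy: "x \<in> carrier G" "y \<in> carrier G" using x y P(2) by auto
  define w where "w = (\<one>\<^bsub>E\<^esub>, x \<otimes>\<^bsub>G\<^esub> inv\<^bsub>G\<^esub> y)"
  have w: "w = (r, x) \<otimes>\<^bsub>?M\<^esub> inv\<^bsub>?M\<^esub> (r, y)" "w \<in> carrier ?M"
    using u v cone xy fxy r assms(4) by (auto simp: w_def pb_group_inv[OF assms(2,3)])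
  have "ab_eta ?M w \<in> ab_cone ?M (pb_cone R P p f)"
    unfolding w(1) by (rule ab_coneI[OF M.group_axioms cone u v])
  moreover have "ab_eta E \<one>\<^bsub>E\<^esub> = ab_map ?M E fst (ab_eta ?M w)"
    using ab_map_eta[OF group_hom_pb_group_fst[OF assms(2,3)] w(2)] by (simp add: w_def)
  ultimately obtain z where z: "z \<in> pb_cone R P p f" "fst z = \<one>\<^bsub>E\<^esub>" "ab_eta ?M z = ab_eta ?M w"
    by (rule trivial_ext_cone_lift[OF assms(7) assms(5)])
  have "z \<in> carrier ?M" using z(1) cone by blast
  then have "z = w"
    by (rule trivial_ext_inj[OF assms(7) _ w(2)]) (simp_all add: z(2,3) w_def)
  then have "x \<otimes>\<^bsub>G\<^esub> inv\<^bsub>G\<^esub> y \<in> P" using z(1) by (simp add: w_def pb_cone_def)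
  then have "inv\<^bsub>G\<^esub> y \<otimes>\<^bsub>G\<^esub> (x \<otimes>\<^bsub>G\<^esub> inv\<^bsub>G\<^esub> y) \<otimes>\<^bsub>G\<^esub> inv\<^bsub>G\<^esub> (inv\<^bsub>G\<^esub> y) \<in> P"
    by (rule P(5)[OF f.G.inv_closed[OF xy(2)]])
  then show "inv\<^bsub>G\<^esub> y \<otimes>\<^bsub>G\<^esub> x \<in> P" using xy by (simp add: f.G.m_assoc)
qed

lemma central_ext_imp_kernel_central_fibre_quotients:
  assumes "preordered_group G P" "preordered_group H Q" "regular_epi G P H Q f"
    and "central_ext TYPE('e) G P H Q f"
  shows "kernel G H f \<subseteq> group_center G \<and> fibre_quotients_in_cone G P f"
proof -
  obtain E :: "'e monoid" and R p where E: "preordered_group E R" "regular_epi E R H Q p"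
    and triv: "trivial_ext (pb_group E G p f) (pb_cone R P p f) E R fst"
    using assms(4) unfolding central_ext_def by blast
  have p: "group_hom E H p" by (rule regular_epi_group_hom[OF E(1) assms(2) E(2)])
  have f: "group_hom G H f" by (rule regular_epi_group_hom[OF assms(1-3)])
  have "f ` carrier G \<subseteq> p ` carrier E" "f ` P \<subseteq> p ` R"
    using regular_epiD(2,3)[OF assms(3)] regular_epiD(2,3)[OF E(2)] by simp_all
  then show ?thesis
    using trivial_pullback_kernel_central[OF p f _ triv]
      trivial_pullback_fibre_quotients_in_cone[OF assms(1) p f _ _ _ triv]
      preordered_groupD(2,3)[OF E(1)] by blast
qed

theorem theorem6p3:
  fixes G :: "'a monoid" and P :: "'a set" and H :: "'b monoid" and Q :: "'b set"
    and f :: "'a \<Rightarrow> 'b"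
  assumes "preordered_group G P" and "preordered_group H Q"
    and "regular_epi G P H Q f"
  shows "((kernel G H f \<subseteq> group_center G \<and>
           special_homogeneous_surj (G\<lparr>carrier := P\<rparr>) (H\<lparr>carrier := Q\<rparr>) f)
          \<longleftrightarrow> normal_ext G P H Q f)
       \<and> (normal_ext G P H Q f \<longrightarrow> central_ext TYPE('a) G P H Q f)
       \<and> (central_ext TYPE('e) G P H Q f \<longrightarrow>
           (kernel G H f \<subseteq> group_center G \<and>
            special_homogeneous_surj (G\<lparr>carrier := P\<rparr>) (H\<lparr>carrier := Q\<rparr>) f))"
proof -
  have f: "group_hom G H f" by (rule regular_epi_group_hom[OF assms])
  have shs: "special_homogeneous_surj (G\<lparr>carrier := P\<rparr>) (H\<lparr>carrier := Q\<rparr>) f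
      \<longleftrightarrow> fibre_quotients_in_cone G P f"
    by (rule special_homogeneous_surj_iff_fibre_quotients_in_cone[OF assms(1) f regular_epiD(3)[OF assms(3)]])
  have normal: "normal_ext G P H Q f"
    if "kernel G H f \<subseteq> group_center G" "fibre_quotients_in_cone G P f"
    unfolding normal_ext_def using assms(3) kernel_pair_fst_trivial_ext[OF assms(1) f that] by blast
  have central: "central_ext TYPE('a) G P H Q f" if "normal_ext G P H Q f"
    using that assms(1) unfolding normal_ext_def central_ext_def by blast
  note converse = central_ext_imp_kernel_central_fibre_quotients[OF assms]
  show ?thesis
    using shs normal central converse[where 'e = 'a] converse[where 'e = 'e] by blast
qed

end
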